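(* For every field $\mathbb{F}$, $n,d\ge1$ and every $n^d\times n^d$ matrix $M$ over $\mathbb{F}$, $\mathrm{PT\text{-}rank}(M)$ equals the minimum of $\sum_{\kappa\subseteq[d-1]}\mathrm{rank}(N_\kappa^{\top_\kappa})$ over all families $(N_\kappa)_{\kappa\subseteq[d-1]}$ of $n^d\times n^d$ matrices with $M=\sum_{\kappa\subseteq[d-1]}N_\kappa$.
   Context: Rows and columns are indexed by $[n]^d$. For $k\in[d]$, $M^{\top_k}_{(i_1,\dots,i_d),(j_1,\dots,j_d)}=M_{(\dots,i_{k-1},j_k,i_{k+1},\dots),(\dots,j_{k-1},i_k,j_{k+1},\dots)}$; $M^{\top_\kappa}$ composes these over $k\in\kappa$. $M$ is PT-basic if $\mathrm{rank}(M^{\top_\kappa})=1$ for some $\kappa\subseteq[d]$; $\mathrm{PT\text{-}rank}(M)$ is the least number of PT-basic matrices summing to $M$. *)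

theory Defs
  imports Complex_Main "HOL-Library.Function_Algebras"
begin

text \<open>Multi-indices in [n]^d are functions nat => nat with coordinates 0..<d
  taking values in 0..<n (extensional: 0 outside 0..<d); coordinates are 0-indexed, so [d] = {0..<d}.
  An n^d x n^d matrix over 'a is a function of a row and a column index;
  only its values on idx n d x idx n d matter.\<close>

type_synonym 'a ptmat = "(nat \<Rightarrow> nat) \<Rightarrow> (nat \<Rightarrow> nat) \<Rightarrow> 'a"

definition idx :: "nat \<Rightarrow> nat \<Rightarrow> (nat \<Rightarrow> nat) set" where
  "idx n d = {f. (\<forall>k<d. f k < n) \<and> (\<forall>k\<ge>d. f k = 0)}"

definition mat_eq_on :: "nat \<Rightarrow> nat \<Rightarrow> 'a ptmat \<Rightarrow> 'a ptmat \<Rightarrow> bool" where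
  "mat_eq_on n d A B \<longleftrightarrow> (\<forall>i\<in>idx n d. \<forall>j\<in>idx n d. A i j = B i j)"

definition pt1 :: "nat \<Rightarrow> 'a ptmat \<Rightarrow> 'a ptmat" where
  "pt1 k M = (\<lambda>i j. M (i(k := j k)) (j(k := i k)))"

text \<open>Partial transpose over a set kappa of coordinates: composition of the pt1 k, k in kappa
  (they commute), which amounts to swapping the kappa-coordinates of row and column.\<close>
definition ptT :: "nat set \<Rightarrow> 'a ptmat \<Rightarrow> 'a ptmat" where
  "ptT \<kappa> M = (\<lambda>i j. M (\<lambda>l. if l \<in> \<kappa> then j l else i l) (\<lambda>l. if l \<in> \<kappa> then i l else j l))"

definition mrank :: "nat \<Rightarrow> nat \<Rightarrow> ('a::field) ptmat \<Rightarrow> nat" where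
  "mrank n d M = vector_space.dim (\<lambda>c (v::(nat \<Rightarrow> nat) \<Rightarrow> 'a) i. c * v i)
     ((\<lambda>j i. if i \<in> idx n d then M i j else 0) ` idx n d)"

definition pt_basic :: "nat \<Rightarrow> nat \<Rightarrow> ('a::field) ptmat \<Rightarrow> bool" where
  "pt_basic n d M \<longleftrightarrow> (\<exists>\<kappa>\<subseteq>{0..<d}. mrank n d (ptT \<kappa> M) = 1)"

definition pt_rank :: "nat \<Rightarrow> nat \<Rightarrow> ('a::field) ptmat \<Rightarrow> nat" where
  "pt_rank n d M = (LEAST r. \<exists>Bs. length Bs = r \<and> (\<forall>B\<in>set Bs. pt_basic n d B) \<and>
      mat_eq_on n d M (\<lambda>i j. \<Sum>B\<leftarrow>Bs. B i j))"

end

theory Submission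
  imports Defs
begin

text \<open>Swapping the row and column coordinates outside \<kappa> is the same as swapping those in
  \<kappa> and then transposing, and transposition preserves rank; hence every PT-basic matrix is
  witnessed by some \<kappa> \<subseteq> [d-1]. Grouping the terms of an optimal PT-decomposition of M by
  this \<kappa> gives a family of matrices N \<kappa> whose cost is at most the PT-rank, by subadditivity
  of rank. Conversely, if the partial transpose of N \<kappa> has rank r it is a sum of r rank-one
  matrices, and partially transposing these back gives r PT-basic matrices summing to N \<kappa>; so
  every family yields a PT-decomposition of M of length at most its cost.\<close>

lemma sum_fun_apply: "(\<Sum>a\<in>A. f a) x = (\<Sum>a\<in>A. f a x)"
  by (induction A rule: infinite_finite_induct) auto

lemma sum_lessThan_add:
  fixes b :: nat
  shows "(\<Sum>l<a + b. f l) = (\<Sum>l<a. f l) + (\<Sum>l<b. f (a + l))"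
  by (induction b) (simp_all add: add.assoc)

lemma sum_list_filter_partition:
  assumes "finite K" "\<forall>x\<in>set xs. k x \<in> K"
  shows "(\<Sum>\<kappa>\<in>K. \<Sum>x\<leftarrow>filter (\<lambda>x. k x = \<kappa>) xs. f x) = (\<Sum>x\<leftarrow>xs. f x)"
  using assms(2)
proof (induction xs)
  case Nil
  then show ?case by simp
next
  case (Cons x xs)
  have "(\<Sum>\<kappa>\<in>K. \<Sum>y\<leftarrow>filter (\<lambda>y. k y = \<kappa>) (x # xs). f y)
      = (\<Sum>\<kappa>\<in>K. (if k x = \<kappa> then f x else 0) + (\<Sum>y\<leftarrow>filter (\<lambda>y. k y = \<kappa>) xs. f y))"
    by (rule sum.cong) auto
  also have "\<dots> = (\<Sum>\<kappa>\<in>K. if k x = \<kappa> then f x else 0) + (\<Sum>\<kappa>\<in>K. \<Sum>y\<leftarrow>filter (\<lambda>y. k y = \<kappa>) xs. f y)"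
    by (rule sum.distrib)
  also have "\<dots> = f x + (\<Sum>y\<leftarrow>xs. f y)"
    using Cons assms(1) by simp
  finally show ?case by simp
qed

lemma subset_atLeastLessThan_pred:
  assumes "A \<subseteq> {0..<d}" "(d::nat) - 1 \<notin> A"
  shows "A \<subseteq> {0..<d - 1}"
proof
  fix t assume "t \<in> A"
  with assms have "t < d" "t \<noteq> d - 1" by auto
  then show "t \<in> {0..<d - 1}" by simp
qed

lemma finite_idx: "finite (idx n d)"
proof -
  have "idx n d = {f. \<forall>k. (k \<in> {0..<d} \<longrightarrow> f k \<in> {0..<n}) \<and> (k \<notin> {0..<d} \<longrightarrow> f k = 0)}"
    by (auto simp: idx_def)
  then show ?thesis by (simp only:) (rule finite_set_of_finite_funs; simp)
qed

lemma mixed_index_in_idx: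
  "i \<in> idx n d \<Longrightarrow> j \<in> idx n d \<Longrightarrow> (\<lambda>l. if l \<in> \<kappa> then j l else i l) \<in> idx n d"
  by (auto simp: idx_def)

subsection \<open>Rank\<close>

interpretation vs: vector_space "\<lambda>(c::'a::field) (v::(nat \<Rightarrow> nat) \<Rightarrow> 'a) i. c * v i"
  by unfold_locales (auto simp: fun_eq_iff algebra_simps)

definition columns :: "nat \<Rightarrow> nat \<Rightarrow> ('a::zero) ptmat \<Rightarrow> ((nat \<Rightarrow> nat) \<Rightarrow> 'a) set" where
  "columns n d A = (\<lambda>j i. if i \<in> idx n d then A i j else 0) ` idx n d"

lemma mrank_eq_dim_columns: "mrank n d A = vs.dim (columns n d A)"
  unfolding mrank_def columns_def ..

lemma rank_one_sum_imp_mrank_le: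
  fixes A :: "('a::field) ptmat"
  assumes "\<forall>i\<in>idx n d. \<forall>j\<in>idx n d. A i j = (\<Sum>l<r. u l i * v l j)"
  shows "mrank n d A \<le> r"
proof -
  define W where "W = (\<lambda>l i. if i \<in> idx n d then u l i else 0) ` {..<r}"
  have "columns n d A \<subseteq> vs.span W"
  proof
    fix c assume "c \<in> columns n d A"
    then obtain j where "j \<in> idx n d" and c: "c = (\<lambda>i. if i \<in> idx n d then A i j else 0)"
      by (auto simp: columns_def)
    then have "c = (\<Sum>l<r. (\<lambda>i. v l j * (if i \<in> idx n d then u l i else 0)))"
      using assms by (auto simp: fun_eq_iff sum_fun_apply mult.commute)
    also have "\<dots> \<in> vs.span W"
      by (rule vs.span_sum, rule vs.span_scale, rule vs.span_base) (auto simp: W_def)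
    finally show "c \<in> vs.span W" .
  qed
  then have "mrank n d A \<le> card W"
    unfolding mrank_eq_dim_columns by (rule vs.dim_le_card) (simp add: W_def)
  also have "card W \<le> r"
    unfolding W_def using card_image_le[of "{..<r}"] by simp
  finally show ?thesis .
qed

lemma mrank_le_imp_rank_one_sum:
  fixes A :: "('a::field) ptmat"
  assumes "mrank n d A \<le> r"
  shows "\<exists>u v. \<forall>i\<in>idx n d. \<forall>j\<in>idx n d. A i j = (\<Sum>l<r. u l i * v l j)"
proof -
  obtain B where B: "B \<subseteq> columns n d A" "columns n d A \<subseteq> vs.span B" "card B = mrank n d A"
    unfolding mrank_eq_dim_columns by (rule vs.basis_exists) blast
  have "finite B"
    using B(1) finite_idx unfolding columns_def by (meson finite_imageI finite_subset)
  obtain e where e: "bij_betw e {0..<card B} B"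
    using ex_bij_betw_nat_finite[OF \<open>finite B\<close>] by blast
  have "\<forall>j\<in>idx n d. \<exists>co. (\<lambda>i. if i \<in> idx n d then A i j else 0) = (\<Sum>b\<in>B. (\<lambda>i. co b * b i))"
  proof
    fix j assume "j \<in> idx n d"
    then have "(\<lambda>i. if i \<in> idx n d then A i j else 0) \<in> vs.span B"
      using B(2) unfolding columns_def by blast
    then show "\<exists>co. (\<lambda>i. if i \<in> idx n d then A i j else 0) = (\<Sum>b\<in>B. (\<lambda>i. co b * b i))"
      unfolding vs.span_finite[OF \<open>finite B\<close>] by blast
  qed
  then obtain co where co: "\<forall>j\<in>idx n d.
      (\<lambda>i. if i \<in> idx n d then A i j else 0) = (\<Sum>b\<in>B. (\<lambda>i. co j b * b i))"
    by (rule bchoice[THEN exE]) blast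
  define u where "u l = (if l < card B then e l else (\<lambda>_. 0))" for l
  define v where "v l j = (if l < card B then co j (e l) else 0)" for l j
  have "A i j = (\<Sum>l<r. u l i * v l j)" if i: "i \<in> idx n d" and j: "j \<in> idx n d" for i j
  proof -
    have "A i j = (\<Sum>b\<in>B. co j b * b i)"
      using fun_cong[OF co[rule_format, OF j], of i] i by (simp add: sum_fun_apply)
    also have "\<dots> = (\<Sum>l<card B. co j (e l) * e l i)"
      using sum.reindex_bij_betw[OF e, of "\<lambda>b. co j b * b i"] by (simp add: atLeast0LessThan)
    also have "\<dots> = (\<Sum>l<card B. u l i * v l j)"
      by (rule sum.cong) (simp_all add: u_def v_def mult.commute)
    also have "\<dots> = (\<Sum>l<r. u l i * v l j)"
      by (rule sum.mono_neutral_left) (use B(3) assms in \<open>auto simp: u_def\<close>)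
    finally show ?thesis .
  qed
  then show ?thesis by blast
qed

lemma mrank_cong:
  assumes "mat_eq_on n d A B"
  shows "mrank n d A = mrank n d B"
proof -
  have "columns n d A = columns n d B"
    using assms unfolding columns_def mat_eq_on_def by (intro image_cong refl) (auto simp: fun_eq_iff)
  then show ?thesis by (simp add: mrank_eq_dim_columns)
qed

lemma mrank_eq_0_imp_zero:
  fixes A :: "('a::field) ptmat"
  assumes "mrank n d A = 0"
  shows "mat_eq_on n d A (\<lambda>_ _. 0)"
  using mrank_le_imp_rank_one_sum[of n d A 0] assms by (auto simp: mat_eq_on_def)

lemma mrank_transpose_le:
  fixes A :: "('a::field) ptmat"
  shows "mrank n d (\<lambda>i j. A j i) \<le> mrank n d A"
proof -
  obtain u v where "\<forall>i\<in>idx n d. \<forall>j\<in>idx n d. A i j = (\<Sum>l<mrank n d A. u l i * v l j)"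
    using mrank_le_imp_rank_one_sum by blast
  then have "\<forall>i\<in>idx n d. \<forall>j\<in>idx n d. A j i = (\<Sum>l<mrank n d A. v l i * u l j)"
    by (simp add: mult.commute)
  then show ?thesis by (rule rank_one_sum_imp_mrank_le)
qed

lemma mrank_transpose:
  fixes A :: "('a::field) ptmat"
  shows "mrank n d (\<lambda>i j. A j i) = mrank n d A"
  using mrank_transpose_le[of n d A] mrank_transpose_le[of n d "\<lambda>i j. A j i"] by simp

lemma mrank_add:
  fixes A B :: "('a::field) ptmat"
  shows "mrank n d (\<lambda>i j. A i j + B i j) \<le> mrank n d A + mrank n d B"
proof -
  let ?a = "mrank n d A" and ?b = "mrank n d B"
  obtain u v where uv: "\<forall>i\<in>idx n d. \<forall>j\<in>idx n d. A i j = (\<Sum>l<?a. u l i * v l j)"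
    using mrank_le_imp_rank_one_sum by blast
  obtain u' v' where uv': "\<forall>i\<in>idx n d. \<forall>j\<in>idx n d. B i j = (\<Sum>l<?b. u' l i * v' l j)"
    using mrank_le_imp_rank_one_sum by blast
  define U where "U l = (if l < ?a then u l else u' (l - ?a))" for l
  define V where "V l = (if l < ?a then v l else v' (l - ?a))" for l
  have "\<forall>i\<in>idx n d. \<forall>j\<in>idx n d. A i j + B i j = (\<Sum>l<?a + ?b. U l i * V l j)"
    using uv uv' by (simp add: sum_lessThan_add U_def V_def)
  then show ?thesis by (rule rank_one_sum_imp_mrank_le)
qed

lemma mrank_sum_list:
  fixes As :: "('a::field) ptmat list"
  shows "mrank n d (\<lambda>i j. \<Sum>A\<leftarrow>As. A i j) \<le> (\<Sum>A\<leftarrow>As. mrank n d A)"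
proof (induction As)
  case Nil
  have "mrank n d (\<lambda>i j. \<Sum>A\<leftarrow>[]. (A :: 'a ptmat) i j) \<le> 0"
    by (rule rank_one_sum_imp_mrank_le[where u = "\<lambda>_ _. 0" and v = "\<lambda>_ _. 0"]) simp
  then show ?case by simp
next
  case (Cons A As)
  then show ?case
    using mrank_add[of n d A "\<lambda>i j. \<Sum>A\<leftarrow>As. A i j"] by simp
qed

subsection \<open>Partial transposes\<close>

lemma ptT_ptT [simp]: "ptT \<kappa> (ptT \<kappa> A) = A"
  unfolding ptT_def by (simp add: fun_eq_iff if_distrib[symmetric] cong: if_cong)

lemma mat_eq_on_ptT: "mat_eq_on n d A B \<Longrightarrow> mat_eq_on n d (ptT \<kappa> A) (ptT \<kappa> B)"
  unfolding mat_eq_on_def ptT_def by (simp add: mixed_index_in_idx)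

lemma mat_eq_on_ptT_swap: "mat_eq_on n d (ptT \<kappa> A) B \<Longrightarrow> mat_eq_on n d A (ptT \<kappa> B)"
  using mat_eq_on_ptT[of n d "ptT \<kappa> A" B \<kappa>] by simp

lemma ptT_complement:
  assumes "i \<in> idx n d" "j \<in> idx n d"
  shows "ptT ({0..<d} - \<kappa>) A i j = ptT \<kappa> A j i"
proof -
  have "(\<lambda>l. if l \<in> {0..<d} - \<kappa> then j l else i l) = (\<lambda>l. if l \<in> \<kappa> then i l else j l)"
       "(\<lambda>l. if l \<in> {0..<d} - \<kappa> then i l else j l) = (\<lambda>l. if l \<in> \<kappa> then j l else i l)"
    using assms by (auto simp: idx_def fun_eq_iff)
  then show ?thesis unfolding ptT_def by simp
qed

lemma mrank_ptT_complement:
  fixes A :: "('a::field) ptmat"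
  shows "mrank n d (ptT ({0..<d} - \<kappa>) A) = mrank n d (ptT \<kappa> A)"
proof -
  have "mrank n d (ptT ({0..<d} - \<kappa>) A) = mrank n d (\<lambda>i j. ptT \<kappa> A j i)"
    by (rule mrank_cong) (simp add: mat_eq_on_def ptT_complement)
  also have "\<dots> = mrank n d (ptT \<kappa> A)"
    by (rule mrank_transpose)
  finally show ?thesis .
qed

lemma pt_basic_last_coordinate_untransposed:
  assumes "pt_basic n d B"
  shows "\<exists>\<kappa>\<subseteq>{0..<d-1}. mrank n d (ptT \<kappa> B) = 1"
proof -
  obtain \<kappa> where \<kappa>: "\<kappa> \<subseteq> {0..<d}" "mrank n d (ptT \<kappa> B) = 1"
    using assms unfolding pt_basic_def by blast
  show ?thesis
  proof (cases "d - 1 \<in> \<kappa>")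
    case False
    with \<kappa> show ?thesis by (metis subset_atLeastLessThan_pred)
  next
    case True
    then have "{0..<d} - \<kappa> \<subseteq> {0..<d-1}" by (intro subset_atLeastLessThan_pred) auto
    with \<kappa>(2) show ?thesis by (metis mrank_ptT_complement)
  qed
qed

lemma pt_basic_or_zero:
  fixes B :: "('a::field) ptmat"
  assumes "\<kappa> \<subseteq> {0..<d}" "mrank n d (ptT \<kappa> B) \<le> 1"
  shows "pt_basic n d B \<or> mat_eq_on n d B (\<lambda>_ _. 0)"
proof (cases "mrank n d (ptT \<kappa> B) = 1")
  case True
  with assms(1) show ?thesis unfolding pt_basic_def by blast
next
  case False
  with assms(2) have "mat_eq_on n d (ptT \<kappa> B) (\<lambda>_ _. 0)"
    by (simp add: mrank_eq_0_imp_zero)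
  then have "mat_eq_on n d B (ptT \<kappa> (\<lambda>_ _. 0))"
    by (rule mat_eq_on_ptT_swap)
  also have "ptT \<kappa> (\<lambda>_ _. 0) = (\<lambda>_ _. 0)"
    by (simp add: ptT_def)
  finally show ?thesis by blast
qed

subsection \<open>PT-decompositions\<close>

definition pt_decomp :: "nat \<Rightarrow> nat \<Rightarrow> ('a::field) ptmat \<Rightarrow> 'a ptmat list \<Rightarrow> bool" where
  "pt_decomp n d M Bs \<longleftrightarrow>
     (\<forall>B\<in>set Bs. pt_basic n d B) \<and> mat_eq_on n d M (\<lambda>i j. \<Sum>B\<leftarrow>Bs. B i j)"

lemma pt_decomp_mat_eq_on:
  "mat_eq_on n d M M' \<Longrightarrow> pt_decomp n d M' Bs \<Longrightarrow> pt_decomp n d M Bs"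
  by (simp add: pt_decomp_def mat_eq_on_def)

lemma pt_decomp_append:
  "pt_decomp n d A Bs \<Longrightarrow> pt_decomp n d B Cs \<Longrightarrow> pt_decomp n d (\<lambda>i j. A i j + B i j) (Bs @ Cs)"
  by (auto simp: pt_decomp_def mat_eq_on_def)

lemma pt_decomp_filter_pt_basic:
  assumes "\<forall>B\<in>set Bs. pt_basic n d B \<or> mat_eq_on n d B (\<lambda>_ _. 0)"
    and "mat_eq_on n d M (\<lambda>i j. \<Sum>B\<leftarrow>Bs. B i j)"
  shows "pt_decomp n d M (filter (pt_basic n d) Bs)"
proof -
  have "(\<Sum>B\<leftarrow>filter (pt_basic n d) Bs. B i j) = (\<Sum>B\<leftarrow>Bs. B i j)"
    if "i \<in> idx n d" "j \<in> idx n d" for i j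
    using assms(1) that by (intro sum_list_map_filter) (auto simp: mat_eq_on_def)
  with assms(2) show ?thesis by (simp add: pt_decomp_def mat_eq_on_def)
qed

lemma pt_decomp_of_mrank_ptT_le:
  fixes A :: "('a::field) ptmat"
  assumes "\<kappa> \<subseteq> {0..<d}" "mrank n d (ptT \<kappa> A) \<le> r"
  shows "\<exists>Bs. length Bs \<le> r \<and> pt_decomp n d A Bs"
proof -
  obtain u v where "\<forall>i\<in>idx n d. \<forall>j\<in>idx n d. ptT \<kappa> A i j = (\<Sum>l<r. u l i * v l j)"
    using mrank_le_imp_rank_one_sum[OF assms(2)] by blast
  then have "mat_eq_on n d A (ptT \<kappa> (\<lambda>i j. \<Sum>l<r. u l i * v l j))"
    by (intro mat_eq_on_ptT_swap) (simp add: mat_eq_on_def)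
  moreover define Cs where "Cs = map (\<lambda>l. ptT \<kappa> (\<lambda>i j. u l i * v l j)) [0..<r]"
  moreover have "ptT \<kappa> (\<lambda>i j. \<Sum>l<r. u l i * v l j) = (\<lambda>i j. \<Sum>C\<leftarrow>Cs. C i j)"
    by (simp add: Cs_def ptT_def comp_def interv_sum_list_conv_sum_set_nat atLeast0LessThan)
  ultimately have "mat_eq_on n d A (\<lambda>i j. \<Sum>C\<leftarrow>Cs. C i j)"
    by simp
  moreover have "pt_basic n d C \<or> mat_eq_on n d C (\<lambda>_ _. 0)" if "C \<in> set Cs" for C
  proof -
    from that obtain l where "C = ptT \<kappa> (\<lambda>i j. u l i * v l j)"
      by (auto simp: Cs_def)
    moreover have "mrank n d (\<lambda>i j. u l i * v l j) \<le> 1"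
      by (rule rank_one_sum_imp_mrank_le[where u = "\<lambda>_. u l" and v = "\<lambda>_. v l"]) simp
    ultimately show ?thesis
      using pt_basic_or_zero[OF assms(1), where B = C] by simp
  qed
  ultimately have "pt_decomp n d A (filter (pt_basic n d) Cs)"
    by (intro pt_decomp_filter_pt_basic) auto
  moreover have "length (filter (pt_basic n d) Cs) \<le> r"
    using length_filter_le[of _ Cs] by (simp add: Cs_def)
  ultimately show ?thesis by blast
qed

lemma pt_decomp_exists: "\<exists>Bs. pt_decomp n d (M :: ('a::field) ptmat) Bs"
  using pt_decomp_of_mrank_ptT_le[of "{}" d n M] by blast

lemma pt_rank_le_length: "pt_decomp n d M Bs \<Longrightarrow> pt_rank n d M \<le> length Bs"
  unfolding pt_rank_def pt_decomp_def by (rule Least_le) blast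

lemma pt_rank_attained:
  obtains Bs where "pt_decomp n d M Bs" "length Bs = pt_rank n d M"
proof -
  have "\<exists>r Bs. length Bs = r \<and> pt_decomp n d M Bs"
    using pt_decomp_exists by blast
  then have "\<exists>Bs. length Bs = pt_rank n d M \<and> pt_decomp n d M Bs"
    unfolding pt_rank_def pt_decomp_def by (rule LeastI_ex)
  then show ?thesis using that by blast
qed

subsection \<open>Families indexed by the transposed coordinates\<close>

lemma pt_decomp_of_family:
  fixes N :: "nat set \<Rightarrow> ('a::field) ptmat"
  assumes "finite K" "\<forall>\<kappa>\<in>K. \<kappa> \<subseteq> {0..<d}"
  shows "\<exists>Bs. length Bs \<le> (\<Sum>\<kappa>\<in>K. mrank n d (ptT \<kappa> (N \<kappa>))) \<and>
             pt_decomp n d (\<lambda>i j. \<Sum>\<kappa>\<in>K. N \<kappa> i j) Bs"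
  using assms
proof (induction K rule: finite_induct)
  case empty
  show ?case by (auto simp: pt_decomp_def mat_eq_on_def)
next
  case (insert \<kappa> K)
  obtain Bs where Bs: "length Bs \<le> mrank n d (ptT \<kappa> (N \<kappa>))" "pt_decomp n d (N \<kappa>) Bs"
    using pt_decomp_of_mrank_ptT_le insert.prems by blast
  obtain Cs where Cs: "length Cs \<le> (\<Sum>\<kappa>\<in>K. mrank n d (ptT \<kappa> (N \<kappa>)))"
      "pt_decomp n d (\<lambda>i j. \<Sum>\<kappa>\<in>K. N \<kappa> i j) Cs"
    using insert by auto
  have "pt_decomp n d (\<lambda>i j. \<Sum>\<kappa>\<in>insert \<kappa> K. N \<kappa> i j) (Bs @ Cs)"
    using pt_decomp_append[OF Bs(2) Cs(2)] insert.hyps by simp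
  moreover have "length (Bs @ Cs) \<le> (\<Sum>\<kappa>\<in>insert \<kappa> K. mrank n d (ptT \<kappa> (N \<kappa>)))"
    using Bs(1) Cs(1) insert.hyps by simp
  ultimately show ?case by blast
qed

corollary pt_rank_le_family_cost:
  fixes N :: "nat set \<Rightarrow> ('a::field) ptmat"
  assumes "finite K" "\<forall>\<kappa>\<in>K. \<kappa> \<subseteq> {0..<d}"
    and "mat_eq_on n d M (\<lambda>i j. \<Sum>\<kappa>\<in>K. N \<kappa> i j)"
  shows "pt_rank n d M \<le> (\<Sum>\<kappa>\<in>K. mrank n d (ptT \<kappa> (N \<kappa>)))"
proof -
  obtain Bs where "length Bs \<le> (\<Sum>\<kappa>\<in>K. mrank n d (ptT \<kappa> (N \<kappa>)))"
      "pt_decomp n d (\<lambda>i j. \<Sum>\<kappa>\<in>K. N \<kappa> i j) Bs"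
    using pt_decomp_of_family[OF assms(1,2)] by blast
  from assms(3) this(2) have "pt_decomp n d M Bs"
    by (rule pt_decomp_mat_eq_on)
  then have "pt_rank n d M \<le> length Bs"
    by (rule pt_rank_le_length)
  with \<open>length Bs \<le> _\<close> show ?thesis by linarith
qed

lemma family_of_pt_decomp:
  fixes M :: "('a::field) ptmat"
  assumes "pt_decomp n d M Bs"
  shows "\<exists>N. mat_eq_on n d M (\<lambda>i j. \<Sum>\<kappa>\<in>Pow {0..<d-1}. N \<kappa> i j) \<and>
             (\<Sum>\<kappa>\<in>Pow {0..<d-1}. mrank n d (ptT \<kappa> (N \<kappa>))) \<le> length Bs"
proof -
  let ?K = "Pow {0..<d-1}"
  have "\<forall>B\<in>set Bs. \<exists>\<kappa>. \<kappa> \<in> ?K \<and> mrank n d (ptT \<kappa> B) = 1"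
  proof
    fix B assume "B \<in> set Bs"
    with assms have "pt_basic n d B" by (simp add: pt_decomp_def)
    then show "\<exists>\<kappa>. \<kappa> \<in> ?K \<and> mrank n d (ptT \<kappa> B) = 1"
      by (meson PowI pt_basic_last_coordinate_untransposed)
  qed
  then obtain k where k: "\<forall>B\<in>set Bs. k B \<in> ?K \<and> mrank n d (ptT (k B) B) = 1"
    by (rule bchoice[THEN exE]) blast
  define N where "N \<kappa> = (\<lambda>i j. \<Sum>B\<leftarrow>filter (\<lambda>B. k B = \<kappa>) Bs. B i j)" for \<kappa>
  have "(\<Sum>\<kappa>\<in>?K. N \<kappa> i j) = (\<Sum>B\<leftarrow>Bs. B i j)" for i j
    unfolding N_def using k by (intro sum_list_filter_partition) auto
  with assms have M_eq: "mat_eq_on n d M (\<lambda>i j. \<Sum>\<kappa>\<in>?K. N \<kappa> i j)"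
    by (simp add: pt_decomp_def)
  have mrank_N: "mrank n d (ptT \<kappa> (N \<kappa>)) \<le> length (filter (\<lambda>B. k B = \<kappa>) Bs)" for \<kappa>
  proof -
    let ?F = "filter (\<lambda>B. k B = \<kappa>) Bs"
    have "ptT \<kappa> (N \<kappa>) = (\<lambda>i j. \<Sum>C\<leftarrow>map (ptT \<kappa>) ?F. C i j)"
      by (simp add: N_def ptT_def comp_def)
    then have "mrank n d (ptT \<kappa> (N \<kappa>)) \<le> (\<Sum>C\<leftarrow>map (ptT \<kappa>) ?F. mrank n d C)"
      using mrank_sum_list[of n d "map (ptT \<kappa>) ?F"] by simp
    also have "\<dots> = (\<Sum>B\<leftarrow>?F. 1)"
      unfolding map_map comp_def using k by (intro arg_cong[where f = sum_list] map_cong) auto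
    also have "\<dots> = length ?F"
      by (simp add: sum_list_triv)
    finally show ?thesis .
  qed
  have "(\<Sum>\<kappa>\<in>?K. mrank n d (ptT \<kappa> (N \<kappa>))) \<le> (\<Sum>\<kappa>\<in>?K. length (filter (\<lambda>B. k B = \<kappa>) Bs))"
    using mrank_N by (intro sum_mono)
  also have "\<dots> = length Bs"
    using sum_list_filter_partition[of ?K Bs k "\<lambda>_. 1::nat"] k by (simp add: sum_list_triv)
  finally show ?thesis using M_eq by blast
qed

theorem lemma3p5:
  fixes M :: "('a::field) ptmat" and n d :: nat
  assumes "n \<ge> 1" and "d \<ge> 1"
  shows "(\<exists>N :: nat set \<Rightarrow> 'a ptmat.
            mat_eq_on n d M (\<lambda>i j. \<Sum>\<kappa>\<in>Pow {0..<d-1}. N \<kappa> i j) \<and>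
            pt_rank n d M = (\<Sum>\<kappa>\<in>Pow {0..<d-1}. mrank n d (ptT \<kappa> (N \<kappa>))))
       \<and> (\<forall>N :: nat set \<Rightarrow> 'a ptmat.
            mat_eq_on n d M (\<lambda>i j. \<Sum>\<kappa>\<in>Pow {0..<d-1}. N \<kappa> i j) \<longrightarrow>
            pt_rank n d M \<le> (\<Sum>\<kappa>\<in>Pow {0..<d-1}. mrank n d (ptT \<kappa> (N \<kappa>))))"
proof -
  have pt_rank_le: "\<forall>N :: nat set \<Rightarrow> 'a ptmat.
            mat_eq_on n d M (\<lambda>i j. \<Sum>\<kappa>\<in>Pow {0..<d-1}. N \<kappa> i j) \<longrightarrow>
            pt_rank n d M \<le> (\<Sum>\<kappa>\<in>Pow {0..<d-1}. mrank n d (ptT \<kappa> (N \<kappa>)))"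
    by (intro allI impI pt_rank_le_family_cost) auto
  obtain Bs where "pt_decomp n d M Bs" "length Bs = pt_rank n d M"
    by (rule pt_rank_attained)
  then obtain N where N: "mat_eq_on n d M (\<lambda>i j. \<Sum>\<kappa>\<in>Pow {0..<d-1}. N \<kappa> i j)"
      and cost: "(\<Sum>\<kappa>\<in>Pow {0..<d-1}. mrank n d (ptT \<kappa> (N \<kappa>))) \<le> pt_rank n d M"
    using family_of_pt_decomp[of n d M Bs] by auto
  have "pt_rank n d M = (\<Sum>\<kappa>\<in>Pow {0..<d-1}. mrank n d (ptT \<kappa> (N \<kappa>)))"
    using pt_rank_le N cost by (blast intro: antisym)
  with N pt_rank_le show ?thesis by blast
qed

end
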